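(* Let $a<b$ and let $f:[a,b]\rightarrow\mathbb{R}$ be an absolutely continuous mapping with $f'\in L^2[a,b]$, and let $\sigma(f')=\|f'\|_2^2-\frac{(f(b)-f(a))^2}{b-a}$. Then \[ \left|\frac{f\left(\frac{3a+b}{4}\right)+f\left(\frac{a+3b}{4}\right)}{2} -\frac{1}{b-a}\int_{a}^{b}f(t)\,dt\right|\leq \frac{(b-a)^{1/2}}{4\sqrt{3}}\sqrt{\sigma(f')}. \]
   Context: $\|g\|_2=\left(\int_a^b g(t)^2\,dt\right)^{1/2}$. *)

theory Defs
  imports "HOL-Analysis.Analysis"
begin

definition absolutely_continuous_real_on :: "(real \<Rightarrow> real) \<Rightarrow> real \<Rightarrow> real \<Rightarrow> bool" where
  "absolutely_continuous_real_on f a b \<longleftrightarrow>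
     (\<forall>e>0. \<exists>d>0. \<forall>(n::nat) (u::nat \<Rightarrow> real) (v::nat \<Rightarrow> real).
        (\<forall>k<n. a \<le> u k \<and> u k \<le> v k \<and> v k \<le> b) \<longrightarrow>
        (\<forall>i<n. \<forall>j<n. i \<noteq> j \<longrightarrow> v i \<le> u j \<or> v j \<le> u i) \<longrightarrow>
        (\<Sum>k<n. v k - u k) < d \<longrightarrow>
        (\<Sum>k<n. \<bar>f (v k) - f (u k)\<bar>) < e)"

end

theory Submission
  imports Defs
begin

text \<open>Let K be the Peano kernel of the rule, equal to t - a, t - (a + b)/2 and t - b on the three
  intervals cut out by the quarter points. Integrating by parts on each of them shows that (b - a)
  times the quantity inside the absolute value is the integral of K (f' - C), for every constant C,
  since K integrates to 0. For C = (f b - f a)/(b - a) the integral of (f' - C)^2 is sigma(f'), and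
  the integral of K^2 is (b - a)^3/48, so the claim is the Cauchy-Schwarz inequality. Integration by
  parts rests on the fundamental theorem of calculus for absolutely continuous functions, which holds
  for the Henstock-Kurzweil integral by the classical gauge argument.\<close>

lemma absolutely_continuous_real_onD:
  assumes "absolutely_continuous_real_on F a b" "e > 0"
  obtains \<delta> where "\<delta> > 0"
    "\<And>Q U V. finite Q \<Longrightarrow> (\<forall>i\<in>Q. a \<le> U i \<and> U i \<le> V i \<and> V i \<le> b) \<Longrightarrow>
      (\<forall>i\<in>Q. \<forall>j\<in>Q. i \<noteq> j \<longrightarrow> V i \<le> U j \<or> V j \<le> U i) \<Longrightarrow>
      (\<Sum>i\<in>Q. V i - U i) < \<delta> \<Longrightarrow> (\<Sum>i\<in>Q. \<bar>F (V i) - F (U i)\<bar>) < e"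
proof -
  from assms(1)[unfolded absolutely_continuous_real_on_def, rule_format, OF assms(2)]
  obtain \<delta> where "\<delta> > 0" and H: "\<And>(n::nat) (u::nat \<Rightarrow> real) v.
        \<forall>k<n. a \<le> u k \<and> u k \<le> v k \<and> v k \<le> b \<Longrightarrow>
        \<forall>i<n. \<forall>j<n. i \<noteq> j \<longrightarrow> v i \<le> u j \<or> v j \<le> u i \<Longrightarrow>
        (\<Sum>k<n. v k - u k) < \<delta> \<Longrightarrow> (\<Sum>k<n. \<bar>F (v k) - F (u k)\<bar>) < e"
    by blast
  show thesis
  proof (rule that[OF \<open>\<delta> > 0\<close>])
    fix Q :: "'a set" and U V
    assume "finite Q" and bounds: "\<forall>i\<in>Q. a \<le> U i \<and> U i \<le> V i \<and> V i \<le> b"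
      and disj: "\<forall>i\<in>Q. \<forall>j\<in>Q. i \<noteq> j \<longrightarrow> V i \<le> U j \<or> V j \<le> U i"
      and small: "(\<Sum>i\<in>Q. V i - U i) < \<delta>"
    obtain h where h: "bij_betw h {..<card Q} Q"
      using ex_bij_betw_nat_finite[OF \<open>finite Q\<close>] by (auto simp: atLeast0LessThan)
    then have h_in: "h k \<in> Q" and h_inj: "h k = h l \<Longrightarrow> k = l"
      if "k < card Q" "l < card Q" for k l
      using that by (auto simp: bij_betw_def inj_on_def)
    have reindex: "(\<Sum>k<card Q. G (h k)) = (\<Sum>i\<in>Q. G i)" for G :: "'a \<Rightarrow> real"
      using sum.reindex_bij_betw[OF h] .
    have "(\<Sum>k<card Q. \<bar>F (V (h k)) - F (U (h k))\<bar>) < e"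
    proof (rule H)
      show "\<forall>k<card Q. a \<le> U (h k) \<and> U (h k) \<le> V (h k) \<and> V (h k) \<le> b"
        using bounds h_in by blast
      show "\<forall>k<card Q. \<forall>l<card Q. k \<noteq> l \<longrightarrow> V (h k) \<le> U (h l) \<or> V (h l) \<le> U (h k)"
      proof (intro allI impI)
        fix k l assume "k < card Q" "l < card Q" "k \<noteq> l"
        then have "h k \<noteq> h l"
          using h_inj by blast
        with \<open>k < card Q\<close> \<open>l < card Q\<close> show "V (h k) \<le> U (h l) \<or> V (h l) \<le> U (h k)"
          using disj h_in by blast
      qed
      show "(\<Sum>k<card Q. V (h k) - U (h k)) < \<delta>"
        using small reindex[of "\<lambda>i. V i - U i"] by simp
    qed
    then show "(\<Sum>i\<in>Q. \<bar>F (V i) - F (U i)\<bar>) < e"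
      using reindex[of "\<lambda>i. \<bar>F (V i) - F (U i)\<bar>"] by simp
  qed
qed

lemma absolutely_continuous_real_on_subinterval:
  assumes "absolutely_continuous_real_on F a b" "a \<le> c" "d \<le> b"
  shows "absolutely_continuous_real_on F c d"
  unfolding absolutely_continuous_real_on_def
proof (intro allI impI)
  fix e :: real assume "e > 0"
  from assms(1)[unfolded absolutely_continuous_real_on_def, rule_format, OF this]
  obtain \<delta> where "\<delta> > 0" and H: "\<And>(n::nat) (u::nat \<Rightarrow> real) v.
        \<forall>k<n. a \<le> u k \<and> u k \<le> v k \<and> v k \<le> b \<Longrightarrow>
        \<forall>i<n. \<forall>j<n. i \<noteq> j \<longrightarrow> v i \<le> u j \<or> v j \<le> u i \<Longrightarrow>
        (\<Sum>k<n. v k - u k) < \<delta> \<Longrightarrow> (\<Sum>k<n. \<bar>F (v k) - F (u k)\<bar>) < e"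
    by blast
  show "\<exists>\<delta>>0. \<forall>(n::nat) (u::nat \<Rightarrow> real) v.
        (\<forall>k<n. c \<le> u k \<and> u k \<le> v k \<and> v k \<le> d) \<longrightarrow>
        (\<forall>i<n. \<forall>j<n. i \<noteq> j \<longrightarrow> v i \<le> u j \<or> v j \<le> u i) \<longrightarrow>
        (\<Sum>k<n. v k - u k) < \<delta> \<longrightarrow> (\<Sum>k<n. \<bar>F (v k) - F (u k)\<bar>) < e"
  proof (intro exI[of _ \<delta>] conjI allI impI)
    fix n :: nat and u v :: "nat \<Rightarrow> real"
    assume "\<forall>k<n. c \<le> u k \<and> u k \<le> v k \<and> v k \<le> d"
    then have "\<forall>k<n. a \<le> u k \<and> u k \<le> v k \<and> v k \<le> b"
      using assms(2,3) by force
    then show "\<forall>i<n. \<forall>j<n. i \<noteq> j \<longrightarrow> v i \<le> u j \<or> v j \<le> u i \<Longrightarrow>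
        (\<Sum>k<n. v k - u k) < \<delta> \<Longrightarrow> (\<Sum>k<n. \<bar>F (v k) - F (u k)\<bar>) < e"
      by (rule H)
  qed (fact \<open>\<delta> > 0\<close>)
qed

lemma absolutely_continuous_real_on_imp_continuous_on:
  assumes "absolutely_continuous_real_on F a b"
  shows "continuous_on {a..b} F"
  unfolding continuous_on_iff
proof (intro ballI allI impI)
  fix x e :: real
  assume "x \<in> {a..b}" "e > 0"
  obtain \<delta> where "\<delta> > 0" and H: "\<And>Q U V. finite (Q :: unit set) \<Longrightarrow> (\<forall>i\<in>Q. a \<le> U i \<and> U i \<le> V i \<and> V i \<le> b) \<Longrightarrow>
      (\<forall>i\<in>Q. \<forall>j\<in>Q. i \<noteq> j \<longrightarrow> V i \<le> U j \<or> V j \<le> U i) \<Longrightarrow>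
      (\<Sum>i\<in>Q. V i - U i) < \<delta> \<Longrightarrow> (\<Sum>i\<in>Q. \<bar>F (V i) - F (U i)\<bar>) < e"
    by (rule absolutely_continuous_real_onD[OF assms \<open>e > 0\<close>]) (rule that)
  show "\<exists>d>0. \<forall>y\<in>{a..b}. dist y x < d \<longrightarrow> dist (F y) (F x) < e"
  proof (intro exI[of _ \<delta>] conjI ballI impI)
    fix y assume "y \<in> {a..b}" "dist y x < \<delta>"
    then have "(\<Sum>i\<in>{()}. \<bar>F (max x y) - F (min x y)\<bar>) < e"
      using \<open>x \<in> {a..b}\<close> by (intro H) (auto simp: dist_real_def)
    then show "dist (F y) (F x) < e"
      by (simp add: dist_real_def max_def min_def abs_minus_commute split: if_splits)
  qed (fact \<open>\<delta> > 0\<close>)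
qed

lemma absolutely_continuous_real_on_bounded:
  assumes "absolutely_continuous_real_on F a b"
  obtains M where "M > 0" "\<And>t. t \<in> {a..b} \<Longrightarrow> \<bar>F t\<bar> \<le> M"
proof -
  have "bounded (F ` {a..b})"
    by (intro compact_imp_bounded compact_continuous_image compact_Icc
        absolutely_continuous_real_on_imp_continuous_on assms)
  then obtain M where "M > 0" "\<forall>y\<in>F ` {a..b}. norm y \<le> M"
    unfolding bounded_pos by blast
  then show thesis
    by (intro that[of M]) auto
qed

lemma sum_abs_diff_mult_le:
  fixes F G :: "real \<Rightarrow> real"
  assumes "\<And>k. k \<in> Q \<Longrightarrow> \<bar>F (v k)\<bar> \<le> MF" "\<And>k. k \<in> Q \<Longrightarrow> \<bar>G (u k)\<bar> \<le> MG"
  shows "(\<Sum>k\<in>Q. \<bar>F (v k) * G (v k) - F (u k) * G (u k)\<bar>)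
    \<le> MF * (\<Sum>k\<in>Q. \<bar>G (v k) - G (u k)\<bar>) + MG * (\<Sum>k\<in>Q. \<bar>F (v k) - F (u k)\<bar>)"
proof -
  have "\<bar>F (v k) * G (v k) - F (u k) * G (u k)\<bar>
      \<le> MF * \<bar>G (v k) - G (u k)\<bar> + MG * \<bar>F (v k) - F (u k)\<bar>" if "k \<in> Q" for k
  proof -
    have "F (v k) * G (v k) - F (u k) * G (u k)
        = F (v k) * (G (v k) - G (u k)) + G (u k) * (F (v k) - F (u k))"
      by (simp add: algebra_simps)
    then have "\<bar>F (v k) * G (v k) - F (u k) * G (u k)\<bar>
        \<le> \<bar>F (v k)\<bar> * \<bar>G (v k) - G (u k)\<bar> + \<bar>G (u k)\<bar> * \<bar>F (v k) - F (u k)\<bar>"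
      by (metis abs_mult abs_triangle_ineq)
    moreover have "\<bar>F (v k)\<bar> * \<bar>G (v k) - G (u k)\<bar> \<le> MF * \<bar>G (v k) - G (u k)\<bar>"
        "\<bar>G (u k)\<bar> * \<bar>F (v k) - F (u k)\<bar> \<le> MG * \<bar>F (v k) - F (u k)\<bar>"
      using assms[OF that] by (simp_all add: mult_right_mono)
    ultimately show ?thesis
      by linarith
  qed
  then have "(\<Sum>k\<in>Q. \<bar>F (v k) * G (v k) - F (u k) * G (u k)\<bar>)
      \<le> (\<Sum>k\<in>Q. MF * \<bar>G (v k) - G (u k)\<bar> + MG * \<bar>F (v k) - F (u k)\<bar>)"
    by (rule sum_mono)
  also have "\<dots> = MF * (\<Sum>k\<in>Q. \<bar>G (v k) - G (u k)\<bar>) + MG * (\<Sum>k\<in>Q. \<bar>F (v k) - F (u k)\<bar>)"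
    by (simp add: sum.distrib sum_distrib_left)
  finally show ?thesis .
qed

lemma absolutely_continuous_real_on_mult:
  assumes F: "absolutely_continuous_real_on F a b" and G: "absolutely_continuous_real_on G a b"
  shows "absolutely_continuous_real_on (\<lambda>t. F t * G t) a b"
  unfolding absolutely_continuous_real_on_def
proof (intro allI impI)
  fix e :: real assume "e > 0"
  obtain MF where "MF > 0" and MF: "\<And>t. t \<in> {a..b} \<Longrightarrow> \<bar>F t\<bar> \<le> MF"
    using absolutely_continuous_real_on_bounded[OF F] by blast
  obtain MG where "MG > 0" and MG: "\<And>t. t \<in> {a..b} \<Longrightarrow> \<bar>G t\<bar> \<le> MG"
    using absolutely_continuous_real_on_bounded[OF G] by blast
  have "e / (2 * MG) > 0" "e / (2 * MF) > 0"
    using \<open>e > 0\<close> \<open>MF > 0\<close> \<open>MG > 0\<close> by simp_all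
  obtain \<delta>F where "\<delta>F > 0" and HF: "\<And>Q U V. finite (Q :: nat set) \<Longrightarrow>
      (\<forall>i\<in>Q. a \<le> U i \<and> U i \<le> V i \<and> V i \<le> b) \<Longrightarrow>
      (\<forall>i\<in>Q. \<forall>j\<in>Q. i \<noteq> j \<longrightarrow> V i \<le> U j \<or> V j \<le> U i) \<Longrightarrow>
      (\<Sum>i\<in>Q. V i - U i) < \<delta>F \<Longrightarrow> (\<Sum>i\<in>Q. \<bar>F (V i) - F (U i)\<bar>) < e / (2 * MG)"
    by (rule absolutely_continuous_real_onD[OF F \<open>e / (2 * MG) > 0\<close>]) (rule that)
  obtain \<delta>G where "\<delta>G > 0" and HG: "\<And>Q U V. finite (Q :: nat set) \<Longrightarrow>
      (\<forall>i\<in>Q. a \<le> U i \<and> U i \<le> V i \<and> V i \<le> b) \<Longrightarrow>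
      (\<forall>i\<in>Q. \<forall>j\<in>Q. i \<noteq> j \<longrightarrow> V i \<le> U j \<or> V j \<le> U i) \<Longrightarrow>
      (\<Sum>i\<in>Q. V i - U i) < \<delta>G \<Longrightarrow> (\<Sum>i\<in>Q. \<bar>G (V i) - G (U i)\<bar>) < e / (2 * MF)"
    by (rule absolutely_continuous_real_onD[OF G \<open>e / (2 * MF) > 0\<close>]) (rule that)
  show "\<exists>\<delta>>0. \<forall>(n::nat) (u::nat \<Rightarrow> real) v.
        (\<forall>k<n. a \<le> u k \<and> u k \<le> v k \<and> v k \<le> b) \<longrightarrow>
        (\<forall>i<n. \<forall>j<n. i \<noteq> j \<longrightarrow> v i \<le> u j \<or> v j \<le> u i) \<longrightarrow>
        (\<Sum>k<n. v k - u k) < \<delta> \<longrightarrow> (\<Sum>k<n. \<bar>F (v k) * G (v k) - F (u k) * G (u k)\<bar>) < e"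
  proof (intro exI[of _ "min \<delta>F \<delta>G"] conjI allI impI)
    fix n and u v :: "nat \<Rightarrow> real"
    assume bounds: "\<forall>k<n. a \<le> u k \<and> u k \<le> v k \<and> v k \<le> b"
      and disj: "\<forall>i<n. \<forall>j<n. i \<noteq> j \<longrightarrow> v i \<le> u j \<or> v j \<le> u i"
      and small: "(\<Sum>k<n. v k - u k) < min \<delta>F \<delta>G"
    have var_F: "(\<Sum>k<n. \<bar>F (v k) - F (u k)\<bar>) < e / (2 * MG)"
      by (rule HF) (use bounds disj small in auto)
    have var_G: "(\<Sum>k<n. \<bar>G (v k) - G (u k)\<bar>) < e / (2 * MF)"
      by (rule HG) (use bounds disj small in auto)
    have "(\<Sum>k<n. \<bar>F (v k) * G (v k) - F (u k) * G (u k)\<bar>)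
        \<le> MF * (\<Sum>k<n. \<bar>G (v k) - G (u k)\<bar>) + MG * (\<Sum>k<n. \<bar>F (v k) - F (u k)\<bar>)"
      using bounds by (intro sum_abs_diff_mult_le MF MG) auto
    also have "\<dots> < MF * (e / (2 * MF)) + MG * (e / (2 * MG))"
      using var_F var_G \<open>MF > 0\<close> \<open>MG > 0\<close> by (intro add_strict_mono mult_strict_left_mono)
    also have "\<dots> = e"
      using \<open>MF > 0\<close> \<open>MG > 0\<close> by simp
    finally show "(\<Sum>k<n. \<bar>F (v k) * G (v k) - F (u k) * G (u k)\<bar>) < e" .
  qed (use \<open>\<delta>F > 0\<close> \<open>\<delta>G > 0\<close> in simp)
qed

lemma absolutely_continuous_real_on_minus_const:
  "absolutely_continuous_real_on (\<lambda>t. t - m) a b"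
  unfolding absolutely_continuous_real_on_def
proof (intro allI impI)
  fix e :: real assume "e > 0"
  then show "\<exists>\<delta>>0. \<forall>(n::nat) (u::nat \<Rightarrow> real) v.
        (\<forall>k<n. a \<le> u k \<and> u k \<le> v k \<and> v k \<le> b) \<longrightarrow>
        (\<forall>i<n. \<forall>j<n. i \<noteq> j \<longrightarrow> v i \<le> u j \<or> v j \<le> u i) \<longrightarrow>
        (\<Sum>k<n. v k - u k) < \<delta> \<longrightarrow> (\<Sum>k<n. \<bar>(v k - m) - (u k - m)\<bar>) < e"
    by (intro exI[of _ e]) simp
qed

lemma interior_Icc_disjoint_imp_le:
  fixes u1 v1 u2 v2 :: real
  assumes "u1 < v1" "u2 < v2" "interior {u1..v1} \<inter> interior {u2..v2} = {}"
  shows "v1 \<le> u2 \<or> v2 \<le> u1"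
proof (rule ccontr)
  assume "\<not> ?thesis"
  then have "(max u1 u2 + min v1 v2) / 2 \<in> interior {u1..v1} \<inter> interior {u2..v2}"
    using assms(1,2) by auto
  then show False
    using assms(3) by blast
qed

text \<open>Content is written measure lborel: plain content would clash with Polynomial.content.\<close>

lemma tagged_partial_division_real_intervalD:
  fixes p :: "(real \<times> real set) set"
  assumes "p tagged_partial_division_of {c..d}" "(x, K) \<in> p"
  shows "K = {Inf K..Sup K}" "c \<le> Inf K" "Inf K \<le> Sup K" "Sup K \<le> d"
    and "measure lborel K = Sup K - Inf K"
proof -
  obtain u v where "K = {u..v}"
    using tagged_partial_division_ofD(4)[OF assms] by (metis box_real(2))
  moreover have "x \<in> K" "K \<subseteq> {c..d}"
    using tagged_partial_division_ofD(2,3)[OF assms] by auto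
  ultimately show "K = {Inf K..Sup K}" "c \<le> Inf K" "Inf K \<le> Sup K" "Sup K \<le> d"
    and "measure lborel K = Sup K - Inf K"
    by auto
qed

lemma tagged_partial_division_intervals_ordered:
  fixes p :: "(real \<times> real set) set"
  assumes p: "p tagged_partial_division_of {c..d}" and "i \<in> p" "j \<in> p" "i \<noteq> j"
    and "Inf (snd i) < Sup (snd i)" "Inf (snd j) < Sup (snd j)"
  shows "Sup (snd i) \<le> Inf (snd j) \<or> Sup (snd j) \<le> Inf (snd i)"
proof -
  have "interior (snd i) \<inter> interior (snd j) = {}"
    using tagged_partial_division_ofD(5)[OF p, of "fst i" "snd i" "fst j" "snd j"] assms(2-4)
    by (auto simp: prod_eq_iff)
  moreover have "snd i = {Inf (snd i)..Sup (snd i)}" "snd j = {Inf (snd j)..Sup (snd j)}"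
    using tagged_partial_division_real_intervalD(1)[OF p] assms(2,3) by (metis prod.collapse)+
  ultimately show ?thesis
    using assms(5,6) by (metis interior_Icc_disjoint_imp_le)
qed

lemma absolutely_continuous_real_on_tagged_partial_division:
  assumes "absolutely_continuous_real_on F c d" "e > 0"
  obtains \<delta> where "\<delta> > 0"
    "\<And>p. p tagged_partial_division_of {c..d} \<Longrightarrow> (\<Sum>(x, K)\<in>p. Sup K - Inf K) < \<delta> \<Longrightarrow>
      (\<Sum>(x, K)\<in>p. \<bar>F (Sup K) - F (Inf K)\<bar>) < e"
proof -
  obtain \<delta> where "\<delta> > 0" and H: "\<And>Q U V. finite (Q :: (real \<times> real set) set) \<Longrightarrow>
      (\<forall>i\<in>Q. c \<le> U i \<and> U i \<le> V i \<and> V i \<le> d) \<Longrightarrow>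
      (\<forall>i\<in>Q. \<forall>j\<in>Q. i \<noteq> j \<longrightarrow> V i \<le> U j \<or> V j \<le> U i) \<Longrightarrow>
      (\<Sum>i\<in>Q. V i - U i) < \<delta> \<Longrightarrow> (\<Sum>i\<in>Q. \<bar>F (V i) - F (U i)\<bar>) < e"
    by (rule absolutely_continuous_real_onD[OF assms]) (rule that)
  show thesis
  proof (rule that[OF \<open>\<delta> > 0\<close>])
    fix p assume p: "p tagged_partial_division_of {c..d}"
      and small: "(\<Sum>(x, K)\<in>p. Sup K - Inf K) < \<delta>"
    note K = tagged_partial_division_real_intervalD[OF p]
    \<comment> \<open>Degenerate intervals contribute nothing but may overlap the others, so they are dropped.\<close>
    define Q where "Q = {(x, K) \<in> p. Inf K < Sup K}"
    have "finite p"
      using p by (rule tagged_partial_division_ofD(1))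
    moreover have "Q \<subseteq> p"
      by (auto simp: Q_def)
    ultimately have "finite Q"
      by (rule finite_subset[rotated])
    have "(\<Sum>(x, K)\<in>p. \<bar>F (Sup K) - F (Inf K)\<bar>) = (\<Sum>(x, K)\<in>Q. \<bar>F (Sup K) - F (Inf K)\<bar>)"
      using \<open>finite p\<close> \<open>Q \<subseteq> p\<close> K(3) by (intro sum.mono_neutral_right) (force simp: Q_def)+
    also have "\<dots> = (\<Sum>i\<in>Q. \<bar>F (Sup (snd i)) - F (Inf (snd i))\<bar>)"
      by (simp add: split_def)
    also have "\<dots> < e"
    proof (rule H[OF \<open>finite Q\<close>])
      show "\<forall>i\<in>Q. c \<le> Inf (snd i) \<and> Inf (snd i) \<le> Sup (snd i) \<and> Sup (snd i) \<le> d"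
        using K \<open>Q \<subseteq> p\<close> by fastforce
      show "\<forall>i\<in>Q. \<forall>j\<in>Q. i \<noteq> j \<longrightarrow> Sup (snd i) \<le> Inf (snd j) \<or> Sup (snd j) \<le> Inf (snd i)"
        using \<open>Q \<subseteq> p\<close> by (intro ballI impI tagged_partial_division_intervals_ordered[OF p])
          (auto simp: Q_def)
      have "(\<Sum>i\<in>Q. Sup (snd i) - Inf (snd i)) \<le> (\<Sum>i\<in>p. Sup (snd i) - Inf (snd i))"
        using \<open>finite p\<close> \<open>Q \<subseteq> p\<close> K(3) by (intro sum_mono2) auto
      then show "(\<Sum>i\<in>Q. Sup (snd i) - Inf (snd i)) < \<delta>"
        using small by (simp add: split_def)
    qed
    finally show "(\<Sum>(x, K)\<in>p. \<bar>F (Sup K) - F (Inf K)\<bar>) < e" .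
  qed
qed

lemma negligible_imp_open_superset:
  assumes "negligible E" "\<delta> > 0"
  obtains T where "open T" "E \<subseteq> T" "T \<in> lmeasurable" "measure lebesgue T < \<delta>"
proof -
  have "E \<in> lmeasurable" "measure lebesgue E = 0"
    using assms(1) by (simp_all add: negligible_imp_measurable negligible_imp_measure0)
  obtain T where T: "open T" "E \<subseteq> T" "T - E \<in> lmeasurable" "emeasure lebesgue (T - E) < ennreal \<delta>"
    using sets_lebesgue_outer_open[OF fmeasurableD[OF \<open>E \<in> lmeasurable\<close>] assms(2)] by blast
  have "T = (T - E) \<union> E"
    using T(2) by blast
  then have "T \<in> lmeasurable" "measure lebesgue T \<le> measure lebesgue (T - E) + measure lebesgue E"
    using T(3) \<open>E \<in> lmeasurable\<close> by (metis fmeasurable.Un, metis fmeasurableD measure_Un_le)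
  moreover have "measure lebesgue (T - E) < \<delta>"
    using T(3,4) assms(2) by (simp add: emeasure_eq_measure2 ennreal_less_iff)
  ultimately show thesis
    using that T(1,2) \<open>measure lebesgue E = 0\<close> by simp
qed

lemma tagged_partial_division_content_le_measure:
  assumes "p tagged_partial_division_of S" "\<Union>(snd ` p) \<subseteq> T" "T \<in> lmeasurable"
  shows "(\<Sum>(x, K)\<in>p. measure lborel K) \<le> measure lebesgue T"
proof -
  have "(\<Sum>(x, K)\<in>p. measure lborel K) = (\<Sum>K\<in>snd ` p. measure lborel K)"
    by (rule sum.over_tagged_division_lemma[OF tagged_partial_division_of_Union_self[OF assms(1)]])
      (simp add: content_eq_0_interior)
  also have "\<dots> = (\<Sum>K\<in>snd ` p. measure lebesgue K)"
  proof (rule sum.cong[OF refl])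
    fix K assume "K \<in> snd ` p"
    then obtain a b where "K = cbox a b"
      using tagged_partial_division_ofD(4)[OF assms(1)] by force
    then show "measure lborel K = measure lebesgue K"
      by simp
  qed
  also have "\<dots> = measure lebesgue (\<Union>(snd ` p))"
    by (rule content_division[OF partial_division_of_tagged_division[OF assms(1)]])
  also have "\<dots> \<le> measure lebesgue T"
    by (intro measure_mono_fmeasurable assms(2,3)
        lmeasurable_division[OF partial_division_of_tagged_division[OF assms(1)]] fmeasurableD)
  finally show ?thesis .
qed

lemma tagged_partial_division_error_sum_le:
  fixes F g :: "real \<Rightarrow> real"
  assumes p: "p tagged_partial_division_of {c..d}" and "c \<le> d" "\<eta> \<ge> 0"
    and err: "\<And>x K. (x, K) \<in> p \<Longrightarrow>
      \<bar>F (Sup K) - F (Inf K) - g x * (Sup K - Inf K)\<bar> \<le> \<eta> * (Sup K - Inf K)"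
  shows "\<bar>\<Sum>(x, K)\<in>p. measure lborel K * g x - (F (Sup K) - F (Inf K))\<bar> \<le> \<eta> * (d - c)"
proof -
  note K = tagged_partial_division_real_intervalD[OF p]
  have "\<bar>\<Sum>(x, K)\<in>p. measure lborel K * g x - (F (Sup K) - F (Inf K))\<bar>
      \<le> (\<Sum>(x, K)\<in>p. \<bar>measure lborel K * g x - (F (Sup K) - F (Inf K))\<bar>)"
    unfolding split_def by (rule sum_abs)
  also have "\<dots> \<le> (\<Sum>(x, K)\<in>p. \<eta> * measure lborel K)"
  proof (rule sum_mono, clarify)
    fix x K assume "(x, K) \<in> p"
    then show "\<bar>measure lborel K * g x - (F (Sup K) - F (Inf K))\<bar> \<le> \<eta> * measure lborel K"
      using err K(5) by (simp add: abs_minus_commute mult.commute)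
  qed
  also have "\<dots> = \<eta> * (\<Sum>(x, K)\<in>p. measure lborel K)"
    by (simp add: sum_distrib_left split_def)
  also have "\<dots> \<le> \<eta> * measure lebesgue {c..d}"
    using tagged_partial_division_ofD(3)[OF p] \<open>\<eta> \<ge> 0\<close>
    by (intro mult_left_mono tagged_partial_division_content_le_measure[OF p]) force+
  finally show ?thesis
    using \<open>c \<le> d\<close> by simp
qed

lemma has_real_derivative_straddle:
  fixes F :: "real \<Rightarrow> real"
  assumes "(F has_real_derivative D) (at x within S)" "\<eta> > 0"
  obtains k where "k > 0" "\<And>u v. x \<in> {u..v} \<Longrightarrow> {u..v} \<subseteq> S \<Longrightarrow> {u..v} \<subseteq> ball x k \<Longrightarrow>
      \<bar>F v - F u - D * (v - u)\<bar> \<le> \<eta> * (v - u)"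
proof -
  obtain k where "k > 0" and k: "\<And>y. y \<in> S \<Longrightarrow> \<bar>y - x\<bar> < k \<Longrightarrow>
      \<bar>F y - F x - D * (y - x)\<bar> \<le> \<eta> * \<bar>y - x\<bar>"
    using assms unfolding has_field_derivative_def has_derivative_within_alt by force
  show thesis
  proof (rule that[OF \<open>k > 0\<close>])
    fix u v assume "x \<in> {u..v}" "{u..v} \<subseteq> S" "{u..v} \<subseteq> ball x k"
    moreover have "u \<in> {u..v}" "v \<in> {u..v}"
      using \<open>x \<in> {u..v}\<close> by auto
    ultimately have "u \<in> S" "v \<in> S" "u \<in> ball x k" "v \<in> ball x k"
      by blast+
    then have "u \<in> S" "v \<in> S" "\<bar>u - x\<bar> < k" "\<bar>v - x\<bar> < k"
      by (simp_all add: dist_real_def abs_minus_commute)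
    then have "\<bar>F u - F x - D * (u - x)\<bar> \<le> \<eta> * \<bar>u - x\<bar>" "\<bar>F v - F x - D * (v - x)\<bar> \<le> \<eta> * \<bar>v - x\<bar>"
      by (simp_all add: k)
    moreover have "\<eta> * \<bar>u - x\<bar> + \<eta> * \<bar>v - x\<bar> = \<eta> * (v - u)"
      using \<open>x \<in> {u..v}\<close> by (simp add: algebra_simps)
    moreover have "F v - F u - D * (v - u) = (F v - F x - D * (v - x)) - (F u - F x - D * (u - x))"
      by (simp add: algebra_simps)
    ultimately show "\<bar>F v - F u - D * (v - u)\<bar> \<le> \<eta> * (v - u)"
      by (smt (verit) abs_triangle_ineq4)
  qed
qed

lemma derivative_gauge_sum_le:
  fixes F g :: "real \<Rightarrow> real"
  assumes "c \<le> d" "\<eta> > 0"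
    and deriv: "\<And>x. x \<in> {c..d} - E \<Longrightarrow> (F has_real_derivative g x) (at x within {c..d})"
  obtains k where "\<And>x. k x > 0"
    "\<And>q. q tagged_partial_division_of {c..d} \<Longrightarrow> (\<And>x K. (x, K) \<in> q \<Longrightarrow> x \<notin> E \<and> K \<subseteq> ball x (k x)) \<Longrightarrow>
      \<bar>\<Sum>(x, K)\<in>q. measure lborel K * g x - (F (Sup K) - F (Inf K))\<bar> \<le> \<eta> * (d - c)"
proof -
  have "\<exists>\<kappa>>0. x \<in> {c..d} - E \<longrightarrow> (\<forall>u v. x \<in> {u..v} \<longrightarrow> {u..v} \<subseteq> {c..d} \<longrightarrow>
      {u..v} \<subseteq> ball x \<kappa> \<longrightarrow> \<bar>F v - F u - g x * (v - u)\<bar> \<le> \<eta> * (v - u))" for x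
  proof (cases "x \<in> {c..d} - E")
    case True
    obtain \<kappa> where "\<kappa> > 0" "\<And>u v. x \<in> {u..v} \<Longrightarrow> {u..v} \<subseteq> {c..d} \<Longrightarrow> {u..v} \<subseteq> ball x \<kappa> \<Longrightarrow>
        \<bar>F v - F u - g x * (v - u)\<bar> \<le> \<eta> * (v - u)"
      by (rule has_real_derivative_straddle[OF deriv[OF True] \<open>\<eta> > 0\<close>]) (rule that)
    then show ?thesis
      by blast
  qed (use zero_less_one in blast)
  then obtain k where k: "\<And>x. k x > 0" "\<And>x u v. x \<in> {c..d} - E \<Longrightarrow> x \<in> {u..v} \<Longrightarrow>
      {u..v} \<subseteq> {c..d} \<Longrightarrow> {u..v} \<subseteq> ball x (k x) \<Longrightarrow> \<bar>F v - F u - g x * (v - u)\<bar> \<le> \<eta> * (v - u)"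
    by metis
  show thesis
  proof (rule that[OF k(1)])
    fix q assume q: "q tagged_partial_division_of {c..d}"
      and fine: "\<And>x K. (x, K) \<in> q \<Longrightarrow> x \<notin> E \<and> K \<subseteq> ball x (k x)"
    show "\<bar>\<Sum>(x, K)\<in>q. measure lborel K * g x - (F (Sup K) - F (Inf K))\<bar> \<le> \<eta> * (d - c)"
    proof (rule tagged_partial_division_error_sum_le[OF q \<open>c \<le> d\<close>])
      fix x K assume "(x, K) \<in> q"
      then have "x \<in> K" "K \<subseteq> {c..d}" "K \<subseteq> ball x (k x)" "x \<notin> E"
        using tagged_partial_division_ofD(2,3)[OF q] fine by auto
      moreover have "{Inf K..Sup K} = K"
        using tagged_partial_division_real_intervalD(1)[OF q \<open>(x, K) \<in> q\<close>] by simp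
      ultimately show "\<bar>F (Sup K) - F (Inf K) - g x * (Sup K - Inf K)\<bar> \<le> \<eta> * (Sup K - Inf K)"
        using k(2)[of x "Inf K" "Sup K"] by auto
    qed (use \<open>\<eta> > 0\<close> in simp)
  qed
qed

lemma absolutely_continuous_negligible_gauge_sum_less:
  assumes AC: "absolutely_continuous_real_on F c d" and "negligible E" "e > 0"
  obtains r where "\<And>x. r x > 0"
    "\<And>q. q tagged_partial_division_of {c..d} \<Longrightarrow> (\<And>x K. (x, K) \<in> q \<Longrightarrow> x \<in> E \<and> K \<subseteq> ball x (r x)) \<Longrightarrow>
      (\<Sum>(x, K)\<in>q. \<bar>F (Sup K) - F (Inf K)\<bar>) < e"
proof -
  obtain \<delta> where "\<delta> > 0" and small_var: "\<And>p. p tagged_partial_division_of {c..d} \<Longrightarrow>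
      (\<Sum>(x, K)\<in>p. Sup K - Inf K) < \<delta> \<Longrightarrow> (\<Sum>(x, K)\<in>p. \<bar>F (Sup K) - F (Inf K)\<bar>) < e"
    by (rule absolutely_continuous_real_on_tagged_partial_division[OF AC \<open>e > 0\<close>]) (rule that)
  obtain T where "open T" "E \<subseteq> T" "T \<in> lmeasurable" "measure lebesgue T < \<delta>"
    using negligible_imp_open_superset[OF \<open>negligible E\<close> \<open>\<delta> > 0\<close>] .
  have "\<exists>\<rho>>0. x \<in> E \<longrightarrow> ball x \<rho> \<subseteq> T" for x
    using \<open>open T\<close> \<open>E \<subseteq> T\<close> open_contains_ball zero_less_one by blast
  then obtain r where r: "\<And>x. r x > 0" "\<And>x. x \<in> E \<Longrightarrow> ball x (r x) \<subseteq> T"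
    by metis
  show thesis
  proof (rule that[OF r(1)])
    fix q assume q: "q tagged_partial_division_of {c..d}"
      and fine: "\<And>x K. (x, K) \<in> q \<Longrightarrow> x \<in> E \<and> K \<subseteq> ball x (r x)"
    have "\<Union>(snd ` q) \<subseteq> T"
      using fine r(2) by force
    then have "(\<Sum>(x, K)\<in>q. measure lborel K) < \<delta>"
      using tagged_partial_division_content_le_measure[OF q _ \<open>T \<in> lmeasurable\<close>]
        \<open>measure lebesgue T < \<delta>\<close> by linarith
    moreover have "(\<Sum>(x, K)\<in>q. measure lborel K) = (\<Sum>(x, K)\<in>q. Sup K - Inf K)"
      using tagged_partial_division_real_intervalD(5)[OF q] by (intro sum.cong) auto
    ultimately show "(\<Sum>(x, K)\<in>q. \<bar>F (Sup K) - F (Inf K)\<bar>) < e"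
      by (intro small_var[OF q]) simp
  qed
qed

lemma absolutely_continuous_derivative_gauge:
  fixes F g :: "real \<Rightarrow> real"
  assumes "c \<le> d" and AC: "absolutely_continuous_real_on F c d" and "negligible E"
    and deriv: "\<And>x. x \<in> {c..d} - E \<Longrightarrow> (F has_real_derivative g x) (at x within {c..d})"
    and "e > 0"
  obtains \<gamma> where "gauge \<gamma>"
    "\<And>p. p tagged_partial_division_of {c..d} \<Longrightarrow> \<gamma> fine p \<Longrightarrow>
      \<bar>\<Sum>(x, K)\<in>{(x, K) \<in> p. x \<notin> E}. measure lborel K * g x - (F (Sup K) - F (Inf K))\<bar>
      + (\<Sum>(x, K)\<in>{(x, K) \<in> p. x \<in> E}. \<bar>F (Sup K) - F (Inf K)\<bar>) < e"
proof -
  define \<eta> where "\<eta> = e / 2 / (d - c + 1)"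
  have "\<eta> > 0"
    using \<open>e > 0\<close> \<open>c \<le> d\<close> by (simp add: \<eta>_def)
  have "\<eta> * (d - c) = e / 2 * ((d - c) / (d - c + 1))"
    by (simp add: \<eta>_def)
  also have "\<dots> < e / 2 * 1"
    using \<open>e > 0\<close> \<open>c \<le> d\<close> by (intro mult_strict_left_mono) simp_all
  finally have "\<eta> * (d - c) < e / 2"
    by simp
  obtain k where k: "\<And>x. k x > 0"
    "\<And>q. q tagged_partial_division_of {c..d} \<Longrightarrow> (\<And>x K. (x, K) \<in> q \<Longrightarrow> x \<notin> E \<and> K \<subseteq> ball x (k x)) \<Longrightarrow>
      \<bar>\<Sum>(x, K)\<in>q. measure lborel K * g x - (F (Sup K) - F (Inf K))\<bar> \<le> \<eta> * (d - c)"
    using derivative_gauge_sum_le[OF \<open>c \<le> d\<close> \<open>\<eta> > 0\<close> deriv] by blast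
  obtain r where r: "\<And>x. r x > 0"
    "\<And>q. q tagged_partial_division_of {c..d} \<Longrightarrow> (\<And>x K. (x, K) \<in> q \<Longrightarrow> x \<in> E \<and> K \<subseteq> ball x (r x)) \<Longrightarrow>
      (\<Sum>(x, K)\<in>q. \<bar>F (Sup K) - F (Inf K)\<bar>) < e / 2"
    using absolutely_continuous_negligible_gauge_sum_less[OF AC \<open>negligible E\<close> half_gt_zero[OF \<open>e > 0\<close>]]
    by blast
  show thesis
  proof (rule that[of "\<lambda>x. ball x (if x \<in> E then r x else k x)"])
    show "gauge (\<lambda>x. ball x (if x \<in> E then r x else k x))"
      using r(1) k(1) by (intro gauge_ball_dependent) simp
    fix p assume p: "p tagged_partial_division_of {c..d}"
      and fine: "(\<lambda>x. ball x (if x \<in> E then r x else k x)) fine p"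
    have pN: "{(x, K) \<in> p. x \<notin> E} tagged_partial_division_of {c..d}"
      and pE: "{(x, K) \<in> p. x \<in> E} tagged_partial_division_of {c..d}"
      using p by (rule tagged_partial_division_subset; force)+
    have "\<bar>\<Sum>(x, K)\<in>{(x, K) \<in> p. x \<notin> E}. measure lborel K * g x - (F (Sup K) - F (Inf K))\<bar>
        \<le> \<eta> * (d - c)"
    proof (rule k(2)[OF pN])
      fix x K assume "(x, K) \<in> {(x, K) \<in> p. x \<notin> E}"
      then show "x \<notin> E \<and> K \<subseteq> ball x (k x)"
        using fineD[OF fine, of x K] by simp
    qed
    moreover have "(\<Sum>(x, K)\<in>{(x, K) \<in> p. x \<in> E}. \<bar>F (Sup K) - F (Inf K)\<bar>) < e / 2"
    proof (rule r(2)[OF pE])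
      fix x K assume "(x, K) \<in> {(x, K) \<in> p. x \<in> E}"
      then show "x \<in> E \<and> K \<subseteq> ball x (r x)"
        using fineD[OF fine, of x K] by simp
    qed
    ultimately show "\<bar>\<Sum>(x, K)\<in>{(x, K) \<in> p. x \<notin> E}. measure lborel K * g x - (F (Sup K) - F (Inf K))\<bar>
        + (\<Sum>(x, K)\<in>{(x, K) \<in> p. x \<in> E}. \<bar>F (Sup K) - F (Inf K)\<bar>) < e"
      using \<open>\<eta> * (d - c) < e / 2\<close> by linarith
  qed
qed

lemma tagged_division_sum_split_tags:
  fixes F g :: "real \<Rightarrow> real"
  assumes "c \<le> d" "p tagged_division_of {c..d}"
  shows "\<bar>(\<Sum>(x, K)\<in>p. measure lborel K * (if x \<in> E then 0 else g x)) - (F d - F c)\<bar>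
    \<le> \<bar>\<Sum>(x, K)\<in>{(x, K) \<in> p. x \<notin> E}. measure lborel K * g x - (F (Sup K) - F (Inf K))\<bar>
      + (\<Sum>(x, K)\<in>{(x, K) \<in> p. x \<in> E}. \<bar>F (Sup K) - F (Inf K)\<bar>)"
proof -
  define pN where "pN = {(x, K) \<in> p. x \<notin> E}"
  define pE where "pE = {(x, K) \<in> p. x \<in> E}"
  define \<Delta> where "\<Delta> K = F (Sup K) - F (Inf K)" for K
  have "pN \<subseteq> p" "pE \<subseteq> p" "p = pN \<union> pE" "pN \<inter> pE = {}"
    by (auto simp: pN_def pE_def)
  moreover have "finite p"
    using assms(2) by blast
  ultimately have "finite pN" "finite pE"
    by (auto intro: finite_subset)
  have "(\<Sum>(x, K)\<in>p. measure lborel K * (if x \<in> E then 0 else g x)) - (F d - F c)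
      = (\<Sum>(x, K)\<in>p. measure lborel K * (if x \<in> E then 0 else g x) - \<Delta> K)"
    using additive_tagged_division_1[OF assms, where f = F] by (simp add: \<Delta>_def sum_subtractf split_def)
  also have "\<dots> = (\<Sum>(x, K)\<in>pN. measure lborel K * (if x \<in> E then 0 else g x) - \<Delta> K)
      + (\<Sum>(x, K)\<in>pE. measure lborel K * (if x \<in> E then 0 else g x) - \<Delta> K)"
    using \<open>finite pN\<close> \<open>finite pE\<close> \<open>p = pN \<union> pE\<close> \<open>pN \<inter> pE = {}\<close> by (simp add: sum.union_disjoint)
  also have "\<dots> = (\<Sum>(x, K)\<in>pN. measure lborel K * g x - \<Delta> K) - (\<Sum>(x, K)\<in>pE. \<Delta> K)"
    unfolding diff_conv_add_uminus sum_negf[symmetric]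
    by (intro arg_cong2[where f = "(+)"] sum.cong) (auto simp: pN_def pE_def)
  finally have "\<bar>(\<Sum>(x, K)\<in>p. measure lborel K * (if x \<in> E then 0 else g x)) - (F d - F c)\<bar>
      \<le> \<bar>\<Sum>(x, K)\<in>pN. measure lborel K * g x - \<Delta> K\<bar> + \<bar>\<Sum>(x, K)\<in>pE. \<Delta> K\<bar>"
    by (simp only: abs_triangle_ineq4)
  also have "\<bar>\<Sum>(x, K)\<in>pE. \<Delta> K\<bar> \<le> (\<Sum>(x, K)\<in>pE. \<bar>\<Delta> K\<bar>)"
    unfolding split_def by (rule sum_abs)
  finally show ?thesis
    by (simp add: pN_def pE_def \<Delta>_def)
qed

lemma fundamental_theorem_of_calculus_absolutely_continuous:
  fixes F g :: "real \<Rightarrow> real"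
  assumes "c \<le> d" and AC: "absolutely_continuous_real_on F c d" and "negligible E"
    and deriv: "\<And>x. x \<in> {c..d} - E \<Longrightarrow> (F has_real_derivative g x) (at x within {c..d})"
  shows "(g has_integral F d - F c) {c..d}"
proof -
  \<comment> \<open>On the negligible set E, where nothing controls g, g is replaced by 0; the gauge then keeps
    the intervals tagged in E inside an open set of small measure, where absolute continuity applies.\<close>
  have "((\<lambda>x. if x \<in> E then 0 else g x) has_integral F d - F c) {c..d}"
    unfolding has_integral[of _ _ c d, unfolded box_real]
  proof (intro allI impI)
    fix e :: real assume "e > 0"
    obtain \<gamma> where "gauge \<gamma>" and \<gamma>: "\<And>p. p tagged_partial_division_of {c..d} \<Longrightarrow> \<gamma> fine p \<Longrightarrow>
        \<bar>\<Sum>(x, K)\<in>{(x, K) \<in> p. x \<notin> E}. measure lborel K * g x - (F (Sup K) - F (Inf K))\<bar>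
        + (\<Sum>(x, K)\<in>{(x, K) \<in> p. x \<in> E}. \<bar>F (Sup K) - F (Inf K)\<bar>) < e"
      using absolutely_continuous_derivative_gauge[OF \<open>c \<le> d\<close> AC \<open>negligible E\<close> deriv \<open>e > 0\<close>] by blast
    show "\<exists>\<gamma>. gauge \<gamma> \<and> (\<forall>p. p tagged_division_of {c..d} \<and> \<gamma> fine p \<longrightarrow>
        norm ((\<Sum>(x, K)\<in>p. measure lborel K *\<^sub>R (if x \<in> E then 0 else g x)) - (F d - F c)) < e)"
    proof (intro exI[of _ \<gamma>] conjI allI impI)
      fix p assume "p tagged_division_of {c..d} \<and> \<gamma> fine p"
      then show "norm ((\<Sum>(x, K)\<in>p. measure lborel K *\<^sub>R (if x \<in> E then 0 else g x)) - (F d - F c)) < e"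
        using tagged_division_sum_split_tags[OF \<open>c \<le> d\<close>, of p E g F] \<gamma>[of p]
        by (auto simp: tagged_division_of_def)
    qed (fact \<open>gauge \<gamma>\<close>)
  qed
  then show ?thesis
    by (rule has_integral_spike[OF \<open>negligible E\<close>, rotated]) simp
qed

lemma has_integral_shifted_power:
  fixes u v m :: real
  assumes "u \<le> v"
  shows "((\<lambda>t. (t - m) ^ n) has_integral ((v - m) ^ Suc n - (u - m) ^ Suc n) / Suc n) {u..v}"
proof -
  have "((\<lambda>t. (t - m) ^ n) has_integral (\<lambda>t. (t - m) ^ Suc n / Suc n) v - (\<lambda>t. (t - m) ^ Suc n / Suc n) u) {u..v}"
  proof (rule fundamental_theorem_of_calculus[OF assms])
    fix x assume "x \<in> {u..v}"
    show "((\<lambda>t. (t - m) ^ Suc n / Suc n) has_vector_derivative (x - m) ^ n) (at x within {u..v})"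
      unfolding has_real_derivative_iff_has_vector_derivative[symmetric]
      by (auto intro!: derivative_eq_intros simp del: of_nat_Suc power_Suc)
  qed
  then show ?thesis
    by (simp add: diff_divide_distrib)
qed

lemma has_integral_combine_piecewise:
  fixes g h :: "real \<Rightarrow> 'a::banach"
  assumes "a \<le> c" "c \<le> b" "(g has_integral I) {a..c}" "(h has_integral J) {c..b}"
  shows "((\<lambda>t. if t < c then g t else h t) has_integral I + J) {a..b}"
proof (rule has_integral_combine[OF assms(1,2)])
  show "((\<lambda>t. if t < c then g t else h t) has_integral I) {a..c}"
    by (rule has_integral_spike_finite[of "{c}", OF _ _ assms(3)]) auto
  show "((\<lambda>t. if t < c then g t else h t) has_integral J) {c..b}"
    by (rule has_integral_eq[OF _ assms(4)]) auto
qed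

lemma has_integral_combine_piecewise3:
  fixes g1 g2 g3 :: "real \<Rightarrow> 'a::banach"
  assumes "a \<le> c" "c \<le> d" "d \<le> b"
    and "(g1 has_integral I1) {a..c}" "(g2 has_integral I2) {c..d}" "(g3 has_integral I3) {d..b}"
  shows "((\<lambda>t. if t < c then g1 t else if t < d then g2 t else g3 t) has_integral I1 + I2 + I3) {a..b}"
  using has_integral_combine_piecewise[OF assms(1) _ assms(4)
      has_integral_combine_piecewise[OF assms(2,3,5,6)]] assms(2,3)
  by (simp add: add.assoc)

definition quarter_kernel :: "real \<Rightarrow> real \<Rightarrow> real \<Rightarrow> real" where
  "quarter_kernel a b t =
    (if t < (3 * a + b) / 4 then t - a else if t < (a + 3 * b) / 4 then t - (a + b) / 2 else t - b)"

lemma quarter_points_ordered: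
  fixes a b :: real
  assumes "a \<le> b"
  shows "a \<le> (3 * a + b) / 4" "(3 * a + b) / 4 \<le> (a + 3 * b) / 4" "(a + 3 * b) / 4 \<le> b"
  using assms by simp_all

lemma has_integral_quarter_kernel:
  assumes "a \<le> b"
  shows "(quarter_kernel a b has_integral 0) {a..b}"
  unfolding quarter_kernel_def
  by (rule has_integral_eq_rhs[OF has_integral_combine_piecewise3[OF quarter_points_ordered[OF assms]
        has_integral_shifted_power[where n = 1 and m = a, simplified]
        has_integral_shifted_power[where n = 1 and m = "(a + b) / 2", simplified]
        has_integral_shifted_power[where n = 1 and m = b, simplified]]])
    (use quarter_points_ordered[OF assms] in \<open>simp_all add: field_simps power2_eq_square\<close>)

lemma has_integral_quarter_kernel_square:
  assumes "a \<le> b"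
  shows "((\<lambda>t. (quarter_kernel a b t)\<^sup>2) has_integral (b - a) ^ 3 / 48) {a..b}"
  unfolding quarter_kernel_def if_distrib[of "\<lambda>x. x\<^sup>2"]
  by (rule has_integral_eq_rhs[OF has_integral_combine_piecewise3[OF quarter_points_ordered[OF assms]
        has_integral_shifted_power[where n = 2 and m = a]
        has_integral_shifted_power[where n = 2 and m = "(a + b) / 2"]
        has_integral_shifted_power[where n = 2 and m = b]]])
    (use quarter_points_ordered[OF assms] in \<open>simp_all add: field_simps power3_eq_cube\<close>)

lemma has_integral_linear_times_derivative:
  fixes f f' :: "real \<Rightarrow> real"
  assumes "u \<le> v" "absolutely_continuous_real_on f u v" "negligible E"
    and "\<And>x. x \<in> {u..v} - E \<Longrightarrow> (f has_real_derivative f' x) (at x within {u..v})"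
  shows "((\<lambda>t. (t - m) * f' t + f t) has_integral (v - m) * f v - (u - m) * f u) {u..v}"
proof -
  have "((\<lambda>t. (t - m) * f t) has_real_derivative (x - m) * f' x + f x) (at x within {u..v})"
    if "x \<in> {u..v} - E" for x
    using assms(4)[OF that] by (auto intro!: derivative_eq_intros simp: algebra_simps)
  then show ?thesis
    using fundamental_theorem_of_calculus_absolutely_continuous[OF assms(1)
        absolutely_continuous_real_on_mult[OF absolutely_continuous_real_on_minus_const assms(2)] assms(3)]
    by simp
qed

lemma has_integral_quarter_kernel_mult_derivative:
  fixes f f' :: "real \<Rightarrow> real"
  assumes "a \<le> b" "absolutely_continuous_real_on f a b" "negligible E"
    and deriv: "\<And>x. x \<in> {a..b} - E \<Longrightarrow> (f has_real_derivative f' x) (at x within {a..b})"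
  shows "((\<lambda>t. quarter_kernel a b t * (f' t - C)) has_integral
      (b - a) * (f ((3 * a + b) / 4) + f ((a + 3 * b) / 4)) / 2 - integral {a..b} f) {a..b}"
proof -
  have piece: "((\<lambda>t. (t - m) * f' t + f t) has_integral (v - m) * f v - (u - m) * f u) {u..v}"
    if "a \<le> u" "u \<le> v" "v \<le> b" for u v m
  proof (rule has_integral_linear_times_derivative[OF \<open>u \<le> v\<close> _ \<open>negligible E\<close>])
    show "absolutely_continuous_real_on f u v"
      using absolutely_continuous_real_on_subinterval[OF assms(2)] that by blast
    show "(f has_real_derivative f' x) (at x within {u..v})" if "x \<in> {u..v} - E" for x
      using has_field_derivative_subset[OF deriv] \<open>a \<le> u\<close> \<open>v \<le> b\<close> that by auto
  qed
  note ordered = quarter_points_ordered[OF \<open>a \<le> b\<close>]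
  have sum: "((\<lambda>t. quarter_kernel a b t * f' t + f t) has_integral
      (b - a) * (f ((3 * a + b) / 4) + f ((a + 3 * b) / 4)) / 2) {a..b}"
    by (rule has_integral_eq[OF _ has_integral_eq_rhs[OF has_integral_combine_piecewise3[OF ordered
          piece[OF order.refl ordered(1) order_trans[OF ordered(2,3)], where m = a]
          piece[OF ordered, where m = "(a + b) / 2"]
          piece[OF order_trans[OF ordered(1,2)] ordered(3) order.refl, where m = b]]]])
      (simp_all add: quarter_kernel_def field_simps)
  have "(f has_integral integral {a..b} f) {a..b}"
    by (intro integrable_integral integrable_continuous_real
        absolutely_continuous_real_on_imp_continuous_on assms(2))
  \<comment> \<open>The kernel integrates to zero, so subtracting a constant from the derivative changes nothing.\<close>
  from has_integral_diff[OF has_integral_diff[OF sum this]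
      has_integral_mult_left[OF has_integral_quarter_kernel[OF \<open>a \<le> b\<close>], where c = C]]
  show ?thesis
    by (simp add: right_diff_distrib)
qed

lemma has_integral_Cauchy_Schwarz:
  fixes g h :: "'a::euclidean_space \<Rightarrow> real"
  assumes "((\<lambda>x. g x * h x) has_integral P) S"
    and "((\<lambda>x. (g x)\<^sup>2) has_integral A) S" "((\<lambda>x. (h x)\<^sup>2) has_integral B) S"
  shows "P\<^sup>2 \<le> A * B"
proof -
  have quadratic: "0 \<le> s\<^sup>2 * A - 2 * s * P + B" for s
  proof -
    have "((\<lambda>x. s\<^sup>2 * (g x)\<^sup>2 - 2 * s * (g x * h x) + (h x)\<^sup>2) has_integral s\<^sup>2 * A - 2 * s * P + B) S"
      by (intro has_integral_add has_integral_diff has_integral_mult_right assms)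
    then have "((\<lambda>x. (s * g x - h x)\<^sup>2) has_integral s\<^sup>2 * A - 2 * s * P + B) S"
      by (simp add: power2_eq_square algebra_simps)
    then show ?thesis
      by (rule has_integral_nonneg) simp
  qed
  have "0 \<le> A"
    using assms(2) by (rule has_integral_nonneg) simp
  show ?thesis
  proof (cases "A = 0")
    case True
    have "P = 0"
    proof (rule ccontr)
      assume "P \<noteq> 0"
      then show False
        using quadratic[of "(B + 1) / (2 * P)"] True by (simp add: field_simps)
    qed
    then show ?thesis
      using True by simp
  next
    case False
    have "0 \<le> A * ((P / A)\<^sup>2 * A - 2 * (P / A) * P + B)"
      using \<open>0 \<le> A\<close> quadratic by (rule mult_nonneg_nonneg)
    also have "\<dots> = A * B - P\<^sup>2"
      using False by (simp add: field_simps power2_eq_square)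
    finally show ?thesis
      by simp
  qed
qed

lemma has_integral_square_deviation:
  fixes g :: "real \<Rightarrow> real"
  assumes "a < b" "(g has_integral I) {a..b}" "((\<lambda>t. (g t)\<^sup>2) has_integral Q) {a..b}"
  shows "((\<lambda>t. (g t - I / (b - a))\<^sup>2) has_integral Q - I\<^sup>2 / (b - a)) {a..b}"
proof -
  define C where "C = I / (b - a)"
  have "((\<lambda>t. (g t)\<^sup>2 - 2 * C * g t + C\<^sup>2) has_integral Q - 2 * C * I + (b - a) * C\<^sup>2) {a..b}"
    using has_integral_add[OF has_integral_diff[OF assms(3) has_integral_mult_right[OF assms(2), where c = "2 * C"]]
        has_integral_const_real[of "C\<^sup>2" a b]] \<open>a < b\<close> by simp
  moreover have "(b - a) * C = I"
    using \<open>a < b\<close> by (simp add: C_def)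
  then have "(b - a) * C\<^sup>2 = C * I"
    by (metis mult.left_commute power2_eq_square)
  then have "Q - 2 * C * I + (b - a) * C\<^sup>2 = Q - I\<^sup>2 / (b - a)"
    by (simp add: C_def power2_eq_square)
  ultimately show ?thesis
    by (simp add: C_def power2_eq_square algebra_simps)
qed

lemma abs_le_sqrt_of_scaled_square_le:
  fixes w D c :: real
  assumes "w \<noteq> 0" "(w * D)\<^sup>2 \<le> w\<^sup>2 * c"
  shows "\<bar>D\<bar> \<le> sqrt c"
proof (rule real_le_rsqrt)
  show "\<bar>D\<bar>\<^sup>2 \<le> c"
    using assms by (simp add: power_mult_distrib)
qed

lemma sqrt_div_48:
  fixes x :: real
  shows "sqrt (x / 48) = sqrt x / (4 * sqrt 3)"
proof -
  have "sqrt 48 = 4 * sqrt (3 :: real)"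
    using real_sqrt_mult[of 16 3] by simp
  then show ?thesis
    by (simp add: real_sqrt_divide)
qed

lemma AE_lebesgue_on_imp_negligible_exceptions:
  assumes "AE t in lebesgue_on S. P t" "S \<in> sets lebesgue"
  obtains N where "negligible N" "\<And>t. t \<in> S - N \<Longrightarrow> P t"
proof -
  obtain N where N: "N \<in> null_sets (lebesgue_on S)" "{t \<in> space (lebesgue_on S). \<not> P t} \<subseteq> N"
    using assms(1) unfolding eventually_ae_filter by blast
  then have "N \<in> null_sets lebesgue"
    using null_sets_restrict_space[OF assms(2)] by blast
  then show thesis
    using N(2) assms(2) by (intro that) (auto simp: negligible_iff_null_sets)
qed

theorem corollary2p9:
  fixes f f' :: "real \<Rightarrow> real" and a b :: real
  assumes "a < b"
    and "absolutely_continuous_real_on f a b"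
    and "AE t in lebesgue_on {a..b}. (f has_real_derivative f' t) (at t)"
    and "f' \<in> borel_measurable (lebesgue_on {a..b})"
    and "integrable (lebesgue_on {a..b}) (\<lambda>t. (f' t)\<^sup>2)"
  shows "\<bar>(f ((3*a + b)/4) + f ((a + 3*b)/4)) / 2 - (1/(b - a)) * integral {a..b} f\<bar>
           \<le> sqrt (b - a) / (4 * sqrt 3)
             * sqrt ((LINT t|lebesgue_on {a..b}. (f' t)\<^sup>2) - (f b - f a)\<^sup>2 / (b - a))"
proof -
  obtain N where "negligible N" and deriv_at: "\<And>t. t \<in> {a..b} - N \<Longrightarrow> (f has_real_derivative f' t) (at t)"
    by (rule AE_lebesgue_on_imp_negligible_exceptions[OF assms(3)]) auto
  have deriv: "(f has_real_derivative f' t) (at t within {a..b})" if "t \<in> {a..b} - N" for t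
    using deriv_at[OF that] by (rule has_field_derivative_at_within)
  define C where "C = (f b - f a) / (b - a)"
  define D where "D = (f ((3*a + b)/4) + f ((a + 3*b)/4)) / 2 - (1/(b - a)) * integral {a..b} f"
  define \<sigma> where "\<sigma> = (LINT t|lebesgue_on {a..b}. (f' t)\<^sup>2) - (f b - f a)\<^sup>2 / (b - a)"
  have "a \<le> b"
    using \<open>a < b\<close> by simp
  have deviation: "((\<lambda>t. (f' t - C)\<^sup>2) has_integral \<sigma>) {a..b}"
    unfolding C_def \<sigma>_def
    using fundamental_theorem_of_calculus_absolutely_continuous[OF \<open>a \<le> b\<close> assms(2) \<open>negligible N\<close> deriv]
    by (intro has_integral_square_deviation \<open>a < b\<close> has_integral_integral_lebesgue_on assms(5)) auto
  have "(b - a) * D = (b - a) * (f ((3*a + b)/4) + f ((a + 3*b)/4)) / 2 - integral {a..b} f"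
    using \<open>a < b\<close> by (simp add: D_def field_simps)
  then have "((\<lambda>t. quarter_kernel a b t * (f' t - C)) has_integral (b - a) * D) {a..b}"
    using has_integral_quarter_kernel_mult_derivative[OF \<open>a \<le> b\<close> assms(2) \<open>negligible N\<close> deriv] by simp
  then have "((b - a) * D)\<^sup>2 \<le> (b - a) ^ 3 / 48 * \<sigma>"
    by (rule has_integral_Cauchy_Schwarz[OF _ has_integral_quarter_kernel_square[OF \<open>a \<le> b\<close>] deviation])
  then have "\<bar>D\<bar> \<le> sqrt ((b - a) * \<sigma> / 48)"
    using \<open>a < b\<close> by (intro abs_le_sqrt_of_scaled_square_le[of "b - a"]) (simp_all add: power3_eq_cube power2_eq_square)
  then show ?thesis
    by (simp add: D_def \<sigma>_def sqrt_div_48 real_sqrt_mult)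
qed

end
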